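(* Let $p>0$, $\lambda>0$, and let $u=u(r)$, $r=|x|$, be a radial solution with $0<u<1$ of \[ \Delta u+\frac{\lambda}{(1-u)^p}=0 \ \text{ in } |x|<1\subset\mathbb{R}^n,\qquad u=0 \text{ on } |x|=1. \] Suppose $u$ is singular, i.e. the problem \[ \omega''+\frac{n-1}{r}\omega'+\lambda\frac{p}{(1-u)^{p+1}}\omega=0\quad(0<r<1),\qquad \omega'(0)=\omega(1)=0 \] has a nontrivial solution. Then \[ \omega(r)=ru'(r)-\frac{2}{p+1}u(r)+\frac{2}{p+1} \] is a solution of this problem. *)

theory Defs
  imports Complex_Main
begin

definition radial_solution :: "nat \<Rightarrow> real \<Rightarrow> real \<Rightarrow> (real \<Rightarrow> real) \<Rightarrow> (real \<Rightarrow> real) \<Rightarrow> (real \<Rightarrow> real) \<Rightarrow> bool" where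
  "radial_solution n lam p u du d2u \<longleftrightarrow>
     (\<forall>r\<in>{0..1}. (u has_real_derivative du r) (at r within {0..1})) \<and>
     (\<forall>r\<in>{0..1}. (du has_real_derivative d2u r) (at r within {0..1})) \<and>
     (\<forall>r\<in>{0<..<1}. d2u r + (real n - 1) / r * du r + lam / (1 - u r) powr p = 0) \<and>
     du 0 = 0 \<and> u 1 = 0 \<and>
     (\<forall>r\<in>{0..<1}. 0 < u r \<and> u r < 1)"

definition linearized_solution :: "nat \<Rightarrow> real \<Rightarrow> real \<Rightarrow> (real \<Rightarrow> real) \<Rightarrow> (real \<Rightarrow> real) \<Rightarrow> bool" where
  "linearized_solution n lam p u w \<longleftrightarrow>
     (\<exists>dw. (\<forall>r\<in>{0..1}. (w has_real_derivative dw r) (at r within {0..1})) \<and>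
           (\<forall>r\<in>{0<..<1}. \<exists>d2w. (dw has_real_derivative d2w) (at r) \<and>
               d2w + (real n - 1) / r * dw r + lam * p / (1 - u r) powr (p + 1) * w r = 0) \<and>
           dw 0 = 0 \<and> w 1 = 0)"

end

theory Submission
  imports Defs
begin

text \<open>The equation is invariant under the scaling u(r) \<mapsto> 1 - \<mu>^(-a) (1 - u(\<mu> r)) precisely
  when a = 2/(p+1); differentiating at \<mu> = 1 shows that \<omega> = r u' - a u + a solves the linearized
  equation with \<omega>'(0) = 0. It remains to see \<omega>(1) = 0. Otherwise take the given nontrivial
  solution w with w(1) = 0. The Wronskian r^(n-1) (\<omega> w' - w \<omega>') is constant and tends to 0
  at r = 0, so it vanishes; near r = 1 this gives w' = w \<omega>'/\<omega> \<rightarrow> 0. Thus w has zero Cauchy data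
  at r = 1, and an energy estimate for w^2 + w'^2 forces w = 0.\<close>

text \<open>y'' + (m/r) y' + q y = 0 is the radial form of \<Delta>y + q y = 0 in dimension m + 1.\<close>

definition radial_ode :: "nat \<Rightarrow> (real \<Rightarrow> real) \<Rightarrow> (real \<Rightarrow> real) \<Rightarrow> (real \<Rightarrow> real) \<Rightarrow> real set \<Rightarrow> bool" where
  "radial_ode m q y dy S \<longleftrightarrow>
     (\<forall>r\<in>S. (y has_real_derivative dy r) (at r) \<and>
       (\<exists>d2y. (dy has_real_derivative d2y) (at r) \<and> d2y + real m / r * dy r + q r * y r = 0))"

lemma radial_ode_subset:
  "radial_ode m q y dy S \<Longrightarrow> T \<subseteq> S \<Longrightarrow> radial_ode m q y dy T"
  unfolding radial_ode_def by blast

lemma radial_ode_wronskian_constant: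
  assumes "radial_ode m q y1 dy1 {a<..<b}" and "radial_ode m q y2 dy2 {a<..<b}" and "0 \<le> a"
    and "r \<in> {a<..<b}" and "s \<in> {a<..<b}"
  shows "r ^ m * (y1 r * dy2 r - y2 r * dy1 r) = s ^ m * (y1 s * dy2 s - y2 s * dy1 s)"
proof (rule DERIV_isconst3[where f = "\<lambda>r. r ^ m * (y1 r * dy2 r - y2 r * dy1 r)"])
  fix r assume r: "r \<in> {a<..<b}"
  obtain d2y1 d2y2 where
    y1: "(y1 has_real_derivative dy1 r) (at r)" "(dy1 has_real_derivative d2y1) (at r)"
        "d2y1 = - (real m / r * dy1 r) - q r * y1 r" and
    y2: "(y2 has_real_derivative dy2 r) (at r)" "(dy2 has_real_derivative d2y2) (at r)"
        "d2y2 = - (real m / r * dy2 r) - q r * y2 r"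
    using assms(1,2) r unfolding radial_ode_def by (smt (verit))
  have "r > 0" using r assms(3) by auto
  then have "real m * r ^ (m - 1) = real m / r * r ^ m"
    by (cases m) (simp_all add: field_simps)
  then show "((\<lambda>r. r ^ m * (y1 r * dy2 r - y2 r * dy1 r)) has_real_derivative 0) (at r)"
    by (auto intro!: derivative_eq_intros y1(1,2) y2(1,2) simp: y1(3) y2(3) algebra_simps)
qed (use assms(4,5) in auto)

text \<open>The derivative need not be continuous at a, so the mean value theorem only yields small
  values of it arbitrarily close to a.\<close>

lemma frequently_small_derivative_at_right:
  fixes f df :: "real \<Rightarrow> real"
  assumes "(f has_real_derivative 0) (at a within {a..b})" and "continuous_on {a..b} f"
    and "\<And>x. x \<in> {a<..<b} \<Longrightarrow> (f has_real_derivative df x) (at x)" and "a < b" and "e > 0"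
  shows "\<exists>\<^sub>F x in at_right a. \<bar>df x\<bar> < e"
  unfolding frequently_at
proof (intro allI impI)
  fix d :: real assume "d > 0"
  have "((\<lambda>x. (f x - f a) / (x - a)) \<longlongrightarrow> 0) (at_right a)"
    using assms(1,4) by (simp add: has_field_derivative_iff at_within_Icc_at_right)
  from tendstoD[OF this \<open>e > 0\<close>] obtain c where "a < c"
    and c: "\<And>x. a < x \<Longrightarrow> x < c \<Longrightarrow> \<bar>(f x - f a) / (x - a)\<bar> < e"
    by (auto simp: eventually_at_right_field dist_real_def)
  define s where "s = (a + min c (min (a + d) b)) / 2"
  have s: "a < s" "s < c" "s < a + d" "s < b"
    using \<open>d > 0\<close> \<open>a < c\<close> assms(4) by (auto simp: s_def)
  obtain z l where z: "a < z" "z < s" and "(f has_real_derivative l) (at z)"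
    and "f s - f a = (s - a) * l"
    using MVT[of a s f] s continuous_on_subset[OF assms(2)] assms(3)
    by (fastforce simp: real_differentiable_def)
  then have "df z = (f s - f a) / (s - a)"
    using DERIV_unique assms(3)[of z] s by fastforce
  then show "\<exists>x\<in>{a<..}. x \<noteq> a \<and> dist x a < d \<and> \<bar>df x\<bar> < e"
    using z s c[of s] by (intro bexI[of _ z]) (auto simp: dist_real_def)
qed

lemma radial_ode_wronskian_eq_0:
  assumes "radial_ode m q y1 dy1 {0<..<1}" and "radial_ode m q y2 dy2 {0<..<1}"
    and "continuous_on {0..1} y1" and "continuous_on {0..1} y2"
    and "(dy1 \<longlongrightarrow> 0) (at_right 0)" and "(y2 has_real_derivative 0) (at 0 within {0..1})"
    and "r \<in> {0<..<1}"
  shows "y1 r * dy2 r = y2 r * dy1 r"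
proof -
  define c where "c = r ^ m * (y1 r * dy2 r - y2 r * dy1 r)"
  define B where "B = \<bar>y1 0\<bar> + \<bar>y2 0\<bar> + 2"
  have B: "B > 0" by (simp add: B_def)
  have c_bound: "\<bar>c\<bar> \<le> B * e" if "e > 0" for e
  proof -
    have "\<forall>\<^sub>F z in at_right 0. \<bar>y1 z\<bar> < \<bar>y1 0\<bar> + 1"
      using tendstoD[OF continuous_on_Icc_at_rightD[OF assms(3)], of 1]
      by (auto simp: dist_real_def elim!: eventually_mono)
    moreover have "\<forall>\<^sub>F z in at_right 0. \<bar>y2 z\<bar> < \<bar>y2 0\<bar> + 1"
      using tendstoD[OF continuous_on_Icc_at_rightD[OF assms(4)], of 1]
      by (auto simp: dist_real_def elim!: eventually_mono)
    moreover have "\<forall>\<^sub>F z in at_right 0. \<bar>dy1 z\<bar> < e"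
      using tendstoD[OF assms(5) \<open>e > 0\<close>] by (simp add: dist_real_def)
    moreover have "\<forall>\<^sub>F z in at_right 0. z \<in> {0<..<1::real}"
      by (auto simp: eventually_at_right_field intro: exI[of _ 1])
    moreover have "\<exists>\<^sub>F z in at_right 0. \<bar>dy2 z\<bar> < e"
      using assms(2,4,6) \<open>e > 0\<close> unfolding radial_ode_def
      by (intro frequently_small_derivative_at_right[where b = 1]) auto
    ultimately have close: "\<exists>\<^sub>F z in at_right 0. \<bar>dy2 z\<bar> < e \<and> \<bar>y1 z\<bar> < \<bar>y1 0\<bar> + 1 \<and>
        \<bar>y2 z\<bar> < \<bar>y2 0\<bar> + 1 \<and> \<bar>dy1 z\<bar> < e \<and> z \<in> {0<..<1}"
      by (intro frequently_eventually_frequently eventually_conj)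
    have bound: "\<bar>c\<bar> \<le> B * e" if z: "\<bar>dy2 z\<bar> < e" "\<bar>y1 z\<bar> < \<bar>y1 0\<bar> + 1"
        "\<bar>y2 z\<bar> < \<bar>y2 0\<bar> + 1" "\<bar>dy1 z\<bar> < e" "z \<in> {0<..<1}" for z
    proof -
      have "\<bar>c\<bar> = z ^ m * \<bar>y1 z * dy2 z - y2 z * dy1 z\<bar>"
        using radial_ode_wronskian_constant[OF assms(1,2) _ assms(7) z(5)] z(5)
        by (simp add: c_def abs_mult)
      also have "\<dots> \<le> \<bar>y1 z * dy2 z - y2 z * dy1 z\<bar>"
        using z(5) by (intro mult_left_le_one_le power_le_one) auto
      also have "\<dots> \<le> \<bar>y1 z\<bar> * \<bar>dy2 z\<bar> + \<bar>y2 z\<bar> * \<bar>dy1 z\<bar>"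
        by (metis abs_mult abs_triangle_ineq4)
      also have "\<dots> \<le> (\<bar>y1 0\<bar> + 1) * e + (\<bar>y2 0\<bar> + 1) * e"
        using z by (intro add_mono mult_mono) auto
      finally show ?thesis by (simp add: B_def algebra_simps)
    qed
    have "\<exists>\<^sub>F z in at_right (0::real). \<bar>c\<bar> \<le> B * e"
      using close by (rule frequently_elim1) (use bound in blast)
    then show ?thesis by simp
  qed
  have "c = 0"
  proof (rule ccontr)
    assume "c \<noteq> 0"
    then have "\<bar>c\<bar> \<le> B * (\<bar>c\<bar> / (2 * B))" using B by (intro c_bound) auto
    then show False using B \<open>c \<noteq> 0\<close> by simp
  qed
  then show ?thesis using assms(7) by (simp add: c_def)
qed

lemma radial_ode_eq_0_if_energy_tendsto_0:
  assumes ode: "radial_ode m q y dy {t..<b}" and "0 < t" and "t < b"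
    and q_bound: "\<And>x. x \<in> {t..<b} \<Longrightarrow> \<bar>q x\<bar> \<le> Q"
    and energy_lim: "((\<lambda>x. (y x)\<^sup>2 + (dy x)\<^sup>2) \<longlongrightarrow> 0) (at_left b)"
  shows "y t = 0"
proof -
  define E where "E x = (y x)\<^sup>2 + (dy x)\<^sup>2" for x
  define C where "C = 1 + Q + 2 * real m / t"
  define F where "F x = E x * exp (C * x)" for x
  have F_mono: "F t \<le> F s" if "t \<le> s" "s < b" for s
  proof (rule DERIV_nonneg_imp_nondecreasing[OF \<open>t \<le> s\<close>])
    fix x assume x: "t \<le> x" "x \<le> s"
    then obtain d2y where y: "(y has_real_derivative dy x) (at x)"
      and dy: "(dy has_real_derivative d2y) (at x)"
      and d2y: "d2y = - (real m / x * dy x) - q x * y x"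
      using ode \<open>s < b\<close> unfolding radial_ode_def by (smt (verit) atLeastLessThan_iff)
    have expand: "2 * y x * dy x + 2 * dy x * d2y + C * E x =
        2 * (1 - q x) * y x * dy x - 2 * (real m / x * (dy x)\<^sup>2) + (1 + Q) * E x + 2 * (real m / t * E x)"
      by (simp add: d2y C_def algebra_simps power2_eq_square)
    have "\<bar>2 * (1 - q x) * y x * dy x\<bar> = \<bar>1 - q x\<bar> * (2 * \<bar>y x * dy x\<bar>)"
      by (simp only: abs_mult mult_ac abs_numeral)
    also have "\<dots> \<le> (1 + Q) * E x"
    proof (rule mult_mono)
      show "\<bar>1 - q x\<bar> \<le> 1 + Q" using q_bound[of x] x \<open>s < b\<close> by auto
      show "2 * \<bar>y x * dy x\<bar> \<le> E x"
        using sum_squares_bound[of "\<bar>y x\<bar>" "\<bar>dy x\<bar>"] by (simp add: E_def abs_mult)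
    qed (use q_bound[of x] x \<open>s < b\<close> in auto)
    finally have coupling: "\<bar>2 * (1 - q x) * y x * dy x\<bar> \<le> (1 + Q) * E x" .
    have damping: "real m / x * (dy x)\<^sup>2 \<le> real m / t * E x"
      using x \<open>0 < t\<close> by (intro mult_mono divide_left_mono) (auto simp: E_def)
    have "0 \<le> 2 * y x * dy x + 2 * dy x * d2y + C * E x"
      unfolding expand using coupling damping by linarith
    moreover have "(F has_real_derivative (2 * y x * dy x + 2 * dy x * d2y + C * E x) * exp (C * x)) (at x)"
      unfolding F_def E_def by (auto intro!: derivative_eq_intros y dy simp: algebra_simps)
    ultimately show "\<exists>d. (F has_real_derivative d) (at x) \<and> 0 \<le> d" by auto
  qed
  have "(F \<longlongrightarrow> 0 * exp (C * b)) (at_left b)"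
    unfolding F_def E_def by (intro tendsto_intros energy_lim)
  moreover have "\<forall>\<^sub>F s in at_left b. F t \<le> F s"
    unfolding eventually_at_left_field using \<open>t < b\<close> by (auto intro!: exI[of _ t] F_mono)
  ultimately have "F t \<le> 0"
    by (intro tendsto_le[OF trivial_limit_at_left_real _ tendsto_const]) auto
  then have "E t \<le> 0" by (simp add: F_def mult_le_0_iff)
  then show ?thesis by (simp add: E_def sum_power2_le_zero_iff)
qed

lemma radial_ode_eq_0_if_vanishing_at_1:
  assumes y1: "radial_ode m q y1 dy1 {0<..<1}" and y2: "radial_ode m q y2 dy2 {0<..<1}"
    and q: "continuous_on {0..1} q"
    and y1_cont: "continuous_on {0..1} y1" and y2_cont: "continuous_on {0..1} y2"
    and dy1_0: "(dy1 \<longlongrightarrow> 0) (at_right 0)" and dy1_1: "(dy1 \<longlongrightarrow> l) (at_left 1)"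
    and dy2_0: "(y2 has_real_derivative 0) (at 0 within {0..1})"
    and "y1 1 \<noteq> 0" and "y2 1 = 0" and "r \<in> {0..1}"
  shows "y2 r = 0"
proof -
  have ev_inside: "\<forall>\<^sub>F x in at_left 1. x \<in> {0<..<1::real}"
    by (auto simp: eventually_at_left_field intro: exI[of _ 0])
  have y1_1: "(y1 \<longlongrightarrow> y1 1) (at_left 1)" and y2_1: "(y2 \<longlongrightarrow> 0) (at_left 1)"
    using continuous_on_Icc_at_leftD[OF y1_cont] continuous_on_Icc_at_leftD[OF y2_cont] \<open>y2 1 = 0\<close>
    by auto
  have "\<forall>\<^sub>F x in at_left 1. y2 x * dy1 x / y1 x = dy2 x"
    using tendsto_imp_eventually_ne[OF y1_1 \<open>y1 1 \<noteq> 0\<close>] ev_inside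
    by eventually_elim
      (use radial_ode_wronskian_eq_0[OF y1 y2 y1_cont y2_cont dy1_0 dy2_0] in \<open>auto simp: field_simps\<close>)
  moreover have "((\<lambda>x. y2 x * dy1 x / y1 x) \<longlongrightarrow> 0 * l / y1 1) (at_left 1)"
    using \<open>y1 1 \<noteq> 0\<close> by (intro tendsto_intros y2_1 dy1_1 y1_1)
  ultimately have dy2_1: "(dy2 \<longlongrightarrow> 0) (at_left 1)"
    by (simp add: tendsto_cong)
  have energy_lim: "((\<lambda>x. (y2 x)\<^sup>2 + (dy2 x)\<^sup>2) \<longlongrightarrow> 0) (at_left 1)"
    using tendsto_add[OF tendsto_power[OF y2_1] tendsto_power[OF dy2_1], of 2 2] by simp
  obtain Q where Q: "\<And>x. x \<in> {0..1} \<Longrightarrow> \<bar>q x\<bar> \<le> Q"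
    using continuous_attains_sup[of "{0..1}" "\<lambda>x. \<bar>q x\<bar>"] continuous_on_rabs[OF q] by force
  have inside: "y2 t = 0" if "t \<in> {0<..<1}" for t
    using that Q
    by (intro radial_ode_eq_0_if_energy_tendsto_0[where Q = Q, OF radial_ode_subset[OF y2]
          _ _ _ energy_lim]) auto
  have "(y2 \<longlongrightarrow> 0) (at_right 0)"
    by (rule tendsto_eventually)
      (auto simp: eventually_at_right_field intro!: exI[of _ 1] inside)
  then have "y2 0 = 0"
    using tendsto_unique[OF _ continuous_on_Icc_at_rightD[OF y2_cont]] by force
  then show ?thesis
    using \<open>r \<in> {0..1}\<close> \<open>y2 1 = 0\<close> inside by (cases "r = 0 \<or> r = 1") auto
qed

lemma radial_solution_less_1:
  assumes "radial_solution n lam p u du d2u" and "r \<in> {0..1}"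
  shows "u r < 1"
  using assms unfolding radial_solution_def by (cases "r = 1") auto

lemma radial_solution_continuous:
  assumes "radial_solution n lam p u du d2u"
  shows "continuous_on {0..1} u" and "continuous_on {0..1} du"
  using assms unfolding radial_solution_def by (auto intro: DERIV_continuous_on)

lemma radial_solution_scaling_derivative_eq:
  assumes "radial_solution n lam p u du d2u" and "r \<in> {0<..<1}"
  shows "(1 - a) * du r + r * d2u r = (2 - real n - a) * du r - lam * r * (1 - u r) powr (- p)"
proof -
  have "d2u r + (real n - 1) / r * du r + lam * (1 - u r) powr (- p) = 0"
    using assms unfolding radial_solution_def by (simp add: powr_minus_divide)
  then show ?thesis using assms(2) by (simp add: field_simps)
qed

lemma radial_solution_has_derivative_at:
  assumes "radial_solution n lam p u du d2u" and "r \<in> {0<..<1}"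
  shows "(u has_real_derivative du r) (at r)" and "(du has_real_derivative d2u r) (at r)"
  using assms unfolding radial_solution_def by (auto simp: at_within_Icc_at dest!: bspec[of _ _ r])

lemma radial_solution_scaling_second_derivative:
  assumes u: "radial_solution n lam p u du d2u" and r: "r \<in> {0<..<1}"
  shows "((\<lambda>r. (1 - a) * du r + r * d2u r) has_real_derivative
           (2 - real n - a) * d2u r - lam * (1 - u r) powr (- p)
             - lam * p * r * (1 - u r) powr (- p - 1) * du r) (at r)"
proof -
  have "0 < 1 - u r" using radial_solution_less_1[OF u] r by simp
  then have "((\<lambda>r. (2 - real n - a) * du r - lam * r * (1 - u r) powr (- p)) has_real_derivative
      (2 - real n - a) * d2u r - lam * (1 - u r) powr (- p)
        - lam * p * r * (1 - u r) powr (- p - 1) * du r) (at r)"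
    by (auto intro!: derivative_eq_intros radial_solution_has_derivative_at[OF u r]
        simp: algebra_simps)
  then show ?thesis
    by (rule has_field_derivative_transform_within_open[OF _ open_greaterThanLessThan r])
      (simp add: radial_solution_scaling_derivative_eq[OF u])
qed

lemma radial_solution_scaling:
  assumes u: "radial_solution n lam p u du d2u" and "n \<ge> 1" and a: "a * (p + 1) = 2"
  shows "radial_ode (n - 1) (\<lambda>r. lam * p / (1 - u r) powr (p + 1))
           (\<lambda>r. r * du r - a * u r + a) (\<lambda>r. (1 - a) * du r + r * d2u r) {0<..<1}"
  unfolding radial_ode_def
proof (intro ballI conjI exI)
  fix r :: real assume r: "r \<in> {0<..<1}"
  show "((\<lambda>r. r * du r - a * u r + a) has_real_derivative (1 - a) * du r + r * d2u r) (at r)"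
    by (auto intro!: derivative_eq_intros radial_solution_has_derivative_at[OF u r]
        simp: algebra_simps)
  have pos: "0 < 1 - u r" using radial_solution_less_1[OF u] r by simp
  have H: "(1 - u r) powr (- p - 1) * (1 - u r) = (1 - u r) powr (- p)"
    using pos powr_add[of "1 - u r" "- p - 1" 1] by simp
  have q: "lam * p / (1 - u r) powr (p + 1) = lam * p * (1 - u r) powr (- p - 1)"
  proof -
    have "- p - 1 = - (p + 1)" by simp
    then show ?thesis by (simp only: powr_minus_divide) simp
  qed
  have "d2u r + (real n - 1) / r * du r + lam * (1 - u r) powr (- p) = 0"
    using u r unfolding radial_solution_def by (simp add: powr_minus_divide)
  then have d2u: "d2u r = - ((real n - 1) / r * du r) - lam * (1 - u r) powr (- p)"
    by linarith
  have "(2 - real n - a) * d2u r - lam * (1 - u r) powr (- p)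
          - lam * p * r * (1 - u r) powr (- p - 1) * du r
          + real (n - 1) / r * ((1 - a) * du r + r * d2u r)
          + lam * p / (1 - u r) powr (p + 1) * (r * du r - a * u r + a)
        = lam * (1 - u r) powr (- p) * (a * (p + 1) - 2)
          + lam * a * p * ((1 - u r) powr (- p - 1) * (1 - u r) - (1 - u r) powr (- p))"
    unfolding q d2u using r \<open>n \<ge> 1\<close> by (simp add: field_simps)
  then show "(2 - real n - a) * d2u r - lam * (1 - u r) powr (- p)
          - lam * p * r * (1 - u r) powr (- p - 1) * du r
          + real (n - 1) / r * ((1 - a) * du r + r * d2u r)
          + lam * p / (1 - u r) powr (p + 1) * (r * du r - a * u r + a) = 0"
    by (simp add: a H)
qed (rule radial_solution_scaling_second_derivative[OF u])

lemma radial_solution_scaling_derivative_tendsto: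
  assumes u: "radial_solution n lam p u du d2u"
  shows "((\<lambda>r. (1 - a) * du r + r * d2u r) \<longlongrightarrow> 0) (at_right 0)"
    and "((\<lambda>r. (1 - a) * du r + r * d2u r) \<longlongrightarrow> (2 - real n - a) * du 1 - lam) (at_left 1)"
proof -
  define V where "V r = (2 - real n - a) * du r - lam * r * (1 - u r) powr (- p)" for r
  have V: "continuous_on {0..1} V"
    unfolding V_def using radial_solution_continuous[OF u] radial_solution_less_1[OF u]
    by (intro continuous_intros) fastforce+
  have "\<forall>\<^sub>F r in at_right 0. V r = (1 - a) * du r + r * d2u r"
    using radial_solution_scaling_derivative_eq[OF u]
    by (auto simp: V_def eventually_at_right_field intro!: exI[of _ 1])
  moreover have "V 0 = 0" using u by (simp add: V_def radial_solution_def)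
  ultimately show "((\<lambda>r. (1 - a) * du r + r * d2u r) \<longlongrightarrow> 0) (at_right 0)"
    using continuous_on_Icc_at_rightD[OF V zero_less_one] by (simp add: tendsto_cong)
  have "\<forall>\<^sub>F r in at_left 1. V r = (1 - a) * du r + r * d2u r"
    using radial_solution_scaling_derivative_eq[OF u]
    by (auto simp: V_def eventually_at_left_field intro!: exI[of _ 0])
  moreover have "V 1 = (2 - real n - a) * du 1 - lam" using u by (simp add: V_def radial_solution_def)
  ultimately show "((\<lambda>r. (1 - a) * du r + r * d2u r) \<longlongrightarrow> (2 - real n - a) * du 1 - lam) (at_left 1)"
    using continuous_on_Icc_at_leftD[OF V zero_less_one] by (simp add: tendsto_cong)
qed

lemma linearized_solution_iff_radial_ode:
  assumes "n \<ge> 1"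
  shows "linearized_solution n lam p u w \<longleftrightarrow>
    (\<exists>dw. (\<forall>r\<in>{0..1}. (w has_real_derivative dw r) (at r within {0..1})) \<and>
      radial_ode (n - 1) (\<lambda>r. lam * p / (1 - u r) powr (p + 1)) w dw {0<..<1} \<and>
      dw 0 = 0 \<and> w 1 = 0)"
proof -
  have "(w has_real_derivative d) (at r) \<longleftrightarrow> (w has_real_derivative d) (at r within {0..1})"
    if "r \<in> {0<..<1}" for r d
    using that by (simp add: at_within_Icc_at)
  then show ?thesis
    using assms unfolding linearized_solution_def radial_ode_def
    by auto
qed

lemma radial_solution_scaling_has_derivative:
  assumes "radial_solution n lam p u du d2u" and "r \<in> {0..1}"
  shows "((\<lambda>r. r * du r - a * u r + a) has_real_derivative (1 - a) * du r + r * d2u r)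
           (at r within {0..1})"
  using assms unfolding radial_solution_def
  by (auto intro!: derivative_eq_intros simp: algebra_simps)

lemma radial_solution_singular_slope_at_1:
  assumes u: "radial_solution n lam p u du d2u" and "n \<ge> 1" and a: "a * (p + 1) = 2"
    and w: "linearized_solution n lam p u w" and "r \<in> {0..1}" and "w r \<noteq> 0"
  shows "du 1 = - a"
proof (rule ccontr)
  define q where "q = (\<lambda>r. lam * p / (1 - u r) powr (p + 1))"
  define \<omega> where "\<omega> = (\<lambda>r. r * du r - a * u r + a)"
  define d\<omega> where "d\<omega> = (\<lambda>r. (1 - a) * du r + r * d2u r)"
  assume "du 1 \<noteq> - a"
  then have "\<omega> 1 \<noteq> 0" using u by (auto simp: \<omega>_def radial_solution_def)
  have \<omega>_ode: "radial_ode (n - 1) q \<omega> d\<omega> {0<..<1}"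
    unfolding q_def \<omega>_def d\<omega>_def by (rule radial_solution_scaling[OF u \<open>n \<ge> 1\<close> a])
  have \<omega>_cont: "continuous_on {0..1} \<omega>"
    unfolding \<omega>_def by (rule DERIV_continuous_on) (rule radial_solution_scaling_has_derivative[OF u])
  have d\<omega>_0: "(d\<omega> \<longlongrightarrow> 0) (at_right 0)"
    and d\<omega>_1: "(d\<omega> \<longlongrightarrow> (2 - real n - a) * du 1 - lam) (at_left 1)"
    unfolding d\<omega>_def by (rule radial_solution_scaling_derivative_tendsto[OF u])+
  have q_cont: "continuous_on {0..1} q"
    unfolding q_def using radial_solution_continuous(1)[OF u] radial_solution_less_1[OF u]
    by (intro continuous_intros) fastforce+
  obtain dw where w_deriv: "\<forall>r\<in>{0..1}. (w has_real_derivative dw r) (at r within {0..1})"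
    and w_ode: "radial_ode (n - 1) q w dw {0<..<1}" and "dw 0 = 0" "w 1 = 0"
    using w unfolding linearized_solution_iff_radial_ode[OF \<open>n \<ge> 1\<close>] q_def by blast
  have w_cont: "continuous_on {0..1} w" using w_deriv by (auto intro: DERIV_continuous_on)
  have w_0: "(w has_real_derivative 0) (at 0 within {0..1})" using w_deriv \<open>dw 0 = 0\<close> by force
  have "w r = 0"
    by (rule radial_ode_eq_0_if_vanishing_at_1[OF \<omega>_ode w_ode q_cont \<omega>_cont w_cont d\<omega>_0 d\<omega>_1 w_0])
      fact+
  then show False using \<open>w r \<noteq> 0\<close> by contradiction
qed

theorem lemma5p2:
  fixes n :: nat and lam p :: real and u du d2u :: "real \<Rightarrow> real"
  assumes "n \<ge> 1" and "p > 0" and "lam > 0"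
    and "radial_solution n lam p u du d2u"
    and "\<exists>\<omega>. linearized_solution n lam p u \<omega> \<and> (\<exists>r\<in>{0..1}. \<omega> r \<noteq> 0)"
  shows "linearized_solution n lam p u (\<lambda>r. r * du r - 2 / (p + 1) * u r + 2 / (p + 1))"
proof -
  define a where "a = 2 / (p + 1)"
  have a: "a * (p + 1) = 2" using \<open>p > 0\<close> by (simp add: a_def field_simps)
  have "du 1 = - a"
    using assms(5) radial_solution_singular_slope_at_1[OF assms(4,1) a] by blast
  then have "1 * du 1 - a * u 1 + a = 0" and "(1 - a) * du 0 + 0 * d2u 0 = 0"
    using assms(4) by (simp_all add: radial_solution_def)
  then have "linearized_solution n lam p u (\<lambda>r. r * du r - a * u r + a)"
    unfolding linearized_solution_iff_radial_ode[OF assms(1)]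
    using radial_solution_scaling_has_derivative[OF assms(4)] radial_solution_scaling[OF assms(4,1) a]
    by (intro exI[of _ "\<lambda>r. (1 - a) * du r + r * d2u r"]) blast
  then show ?thesis by (simp add: a_def)
qed

end
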